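(* Every (not necessarily translation-invariant) Miura type transformation over the equation $u_t=u^{5/2}u_5$ (considered in the complex-analytic category) has order at most $5$.
   Context: $u_j=\partial^ju/\partial x^j$. A Miura type transformation over an evolution equation $u_t=P$ is a pair of an evolution equation $v_t=R(x,t,v,v_1,\dots,v_r)$ and a substitution $u=S(x,t,v,v_1,\dots,v_n)$ such that whenever $v$ satisfies $v_t=R$, the function $u=S$ satisfies $u_t=P$; its order is the largest $n$ such that $S$ depends nontrivially on $v_n$. Considerations are local. *)

theory Defs
  imports "HOL-Analysis.Analysis"
begin

text \<open>A point of the (infinite) jet space is (x, t, w) where w k stands for v_k.\<close>

type_synonym jfun = "complex \<Rightarrow> complex \<Rightarrow> (nat \<Rightarrow> complex) \<Rightarrow> complex"

definition dX :: "jfun \<Rightarrow> jfun" where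
  "dX F = (\<lambda>x t w. deriv (\<lambda>y. F y t w) x)"

definition dT :: "jfun \<Rightarrow> jfun" where
  "dT F = (\<lambda>x t w. deriv (\<lambda>s. F x s w) t)"

definition dV :: "nat \<Rightarrow> jfun \<Rightarrow> jfun" where
  "dV k F = (\<lambda>x t w. deriv (\<lambda>z. F x t (w(k := z))) (w k))"

definition depends_upto :: "nat \<Rightarrow> jfun \<Rightarrow> bool" where
  "depends_upto m F \<longleftrightarrow>
     (\<forall>x t w w'. (\<forall>k\<le>m. w k = w' k) \<longrightarrow> F x t w = F x t w')"

text \<open>F is a (complex-)analytic function of x, t, v_0, ..., v_m on the open set U
of the jet space: it depends only on these finitely many coordinates, is continuous on U
and is holomorphic in each variable separately (by Osgood's lemma this is joint
holomorphy in the finitely many variables).\<close>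
definition jet_analytic :: "nat \<Rightarrow> jfun \<Rightarrow> (complex \<times> complex \<times> (nat \<Rightarrow> complex)) set \<Rightarrow> bool" where
  "jet_analytic m F U \<longleftrightarrow>
     open U \<and> depends_upto m F \<and>
     continuous_on U (\<lambda>(x, t, w). F x t w) \<and>
     (\<forall>x t w. (x, t, w) \<in> U \<longrightarrow>
        (\<lambda>y. F y t w) holomorphic_on {y. (y, t, w) \<in> U} \<and>
        (\<lambda>s. F x s w) holomorphic_on {s. (x, s, w) \<in> U} \<and>
        (\<forall>k. (\<lambda>z. F x t (w(k := z))) holomorphic_on {z. (x, t, w(k := z)) \<in> U}))"

text \<open>Total x-derivative D_x, truncated at v_N (exact for functions depending only on
v_0, ..., v_(N-1)).\<close>
definition Dx :: "nat \<Rightarrow> jfun \<Rightarrow> jfun" where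
  "Dx N F = (\<lambda>x t w. dX F x t w + (\<Sum>k<N. w (Suc k) * dV k F x t w))"

text \<open>Total t-derivative of F by virtue of the evolution equation v_t = R:
D_t F = F_t + sum_k D_x^k(R) * dF/dv_k  (truncated at N).\<close>
definition Dt_evol :: "nat \<Rightarrow> jfun \<Rightarrow> jfun \<Rightarrow> jfun" where
  "Dt_evol N R F = (\<lambda>x t w. dT F x t w + (\<Sum>k<N. (Dx N ^^ k) R x t w * dV k F x t w))"

end

(* Suppose the substitution u = S had order n >= 6, and let v_t = R have order r.  In
   D_t S = S^(5/2) D_x^5 S the left side is affine in v_(n+r) with coefficient R_(v_r) S_(v_n),
   while the right side involves v only up to v_(n+5).  So while r >= 6, R_(v_r) S_(v_n) = 0.
   On a small product neighbourhood each of whose v_n-slices contains a point with S_(v_n) <> 0,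
   the identity theorem then shows that R does not depend on v_r there; freezing v_r lowers r.
   Once r <= 5, the coefficients of v_(n+5) give R_(v_5) = S^(5/2) wherever S_(v_n) <> 0.  The
   left side does not depend on v_n (as n >= 6), so S^5 is constant along v_n near such a point,
   contradicting S_(v_n) <> 0. *)

theory Submission
  imports Defs "HOL-Complex_Analysis.Complex_Analysis"
begin

section \<open>Dependence on finitely many jet variables\<close>

lemma depends_uptoD:
  "depends_upto m F \<Longrightarrow> (\<And>k. k \<le> m \<Longrightarrow> w k = w' k) \<Longrightarrow> F x t w = F x t w'"
  unfolding depends_upto_def by blast

lemma depends_upto_mono: "depends_upto m F \<Longrightarrow> m \<le> m' \<Longrightarrow> depends_upto m' F"
  unfolding depends_upto_def by auto

lemma depends_upto_upd_eq: "depends_upto m F \<Longrightarrow> m < j \<Longrightarrow> F x t (w(j := z)) = F x t w"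
  by (rule depends_uptoD) auto

lemma depends_upto_upd_top:
  assumes "depends_upto r R"
  shows "depends_upto (r - 1) (\<lambda>x t w. R x t (w(r := c)))"
  unfolding depends_upto_def[of "r - 1"] by (intro allI impI depends_uptoD[OF assms]) auto

lemma depends_upto_coord: "j \<le> m \<Longrightarrow> depends_upto m (\<lambda>x t w. w j)"
  unfolding depends_upto_def by auto

lemma depends_upto_comp: "depends_upto m F \<Longrightarrow> depends_upto m (\<lambda>x t w. g (F x t w))"
  unfolding depends_upto_def by (intro allI impI) (metis (no_types))

lemma depends_upto_add:
  "depends_upto m F \<Longrightarrow> depends_upto m G \<Longrightarrow> depends_upto m (\<lambda>x t w. F x t w + G x t w)"
  unfolding depends_upto_def by (intro allI impI) (metis (no_types))

lemma depends_upto_mult: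
  "depends_upto m F \<Longrightarrow> depends_upto m G \<Longrightarrow> depends_upto m (\<lambda>x t w. F x t w * G x t w)"
  unfolding depends_upto_def by (intro allI impI) (metis (no_types))

lemma depends_upto_sum:
  "(\<And>j. j \<in> J \<Longrightarrow> depends_upto m (F j)) \<Longrightarrow> depends_upto m (\<lambda>x t w. \<Sum>j\<in>J. F j x t w)"
  unfolding depends_upto_def by (intro allI impI sum.cong) blast+

lemma dV_eq_0_above: "depends_upto m F \<Longrightarrow> m < k \<Longrightarrow> dV k F x t w = 0"
  by (simp add: dV_def depends_upto_upd_eq)

lemma depends_upto_dX:
  assumes "depends_upto m F"
  shows "depends_upto m (dX F)"
  unfolding depends_upto_def dX_def
proof (intro allI impI)
  fix x t :: complex and w w' :: "nat \<Rightarrow> complex"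
  assume "\<forall>k\<le>m. w k = w' k"
  then have "(\<lambda>y. F y t w) = (\<lambda>y. F y t w')"
    by (intro ext depends_uptoD[OF assms]) auto
  then show "deriv (\<lambda>y. F y t w) x = deriv (\<lambda>y. F y t w') x"
    by simp
qed

lemma depends_upto_dT:
  assumes "depends_upto m F"
  shows "depends_upto m (dT F)"
  unfolding depends_upto_def dT_def
proof (intro allI impI)
  fix x t :: complex and w w' :: "nat \<Rightarrow> complex"
  assume "\<forall>k\<le>m. w k = w' k"
  then have "(\<lambda>s. F x s w) = (\<lambda>s. F x s w')"
    by (intro ext depends_uptoD[OF assms]) auto
  then show "deriv (\<lambda>s. F x s w) t = deriv (\<lambda>s. F x s w') t"
    by simp
qed

lemma depends_upto_dV:
  assumes "depends_upto m F"
  shows "depends_upto m (dV k F)"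
proof (cases "m < k")
  case True
  then show ?thesis
    by (simp add: depends_upto_def dV_eq_0_above[OF assms])
next
  case False
  show ?thesis
    unfolding depends_upto_def dV_def
  proof (intro allI impI)
    fix x t :: complex and w w' :: "nat \<Rightarrow> complex"
    assume w: "\<forall>i\<le>m. w i = w' i"
    then have "(\<lambda>z. F x t (w(k := z))) = (\<lambda>z. F x t (w'(k := z)))"
      by (intro ext depends_uptoD[OF assms]) auto
    moreover have "w k = w' k"
      using w False by simp
    ultimately show "deriv (\<lambda>z. F x t (w(k := z))) (w k) = deriv (\<lambda>z. F x t (w'(k := z))) (w' k)"
      by simp
  qed
qed

lemma depends_upto_Dx: "depends_upto m F \<Longrightarrow> depends_upto m (Dx m F)"
  unfolding Dx_def
  by (intro depends_upto_add depends_upto_mult depends_upto_sum depends_upto_dX depends_upto_dV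
      depends_upto_coord) auto

lemma Dx_eq_leading_term:
  assumes "depends_upto m F" "m < N"
  shows "Dx N F x t w = Dx m F x t w + w (Suc m) * dV m F x t w"
proof -
  have "(\<Sum>k<N. w (Suc k) * dV k F x t w) = (\<Sum>k<Suc m. w (Suc k) * dV k F x t w)"
    using assms by (intro sum.mono_neutral_right) (auto simp: dV_eq_0_above)
  then show ?thesis unfolding Dx_def by (simp add: add.assoc)
qed

lemma dV_affine:
  assumes "depends_upto m P" "depends_upto m Q" "m < j" "\<And>x t w. F x t w = P x t w + w j * Q x t w"
  shows "dV j F x t w = Q x t w"
proof -
  have "(\<lambda>z. F x t (w(j := z))) = (\<lambda>z. P x t w + z * Q x t w)"
    using assms by (simp add: depends_upto_upd_eq)
  moreover have "((\<lambda>z. P x t w + z * Q x t w) has_field_derivative Q x t w) (at (w j))"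
    by (auto intro!: derivative_eq_intros)
  ultimately show ?thesis unfolding dV_def by (simp add: DERIV_imp_deriv)
qed

lemma depends_upto_Dx_pow:
  assumes "depends_upto m F" "m + k \<le> N"
  shows "depends_upto (m + k) ((Dx N ^^ k) F)"
  using assms(2)
proof (induction k)
  case 0
  with assms(1) show ?case by simp
next
  case (Suc k)
  then have G: "depends_upto (m + k) ((Dx N ^^ k) F)"
    by simp
  have "(Dx N ^^ Suc k) F = (\<lambda>x t w. Dx (m + k) ((Dx N ^^ k) F) x t w
      + w (Suc (m + k)) * dV (m + k) ((Dx N ^^ k) F) x t w)"
    using Suc.prems by (intro ext) (simp add: Dx_eq_leading_term[OF G])
  moreover have "depends_upto (m + Suc k) (\<lambda>x t w. Dx (m + k) ((Dx N ^^ k) F) x t w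
      + w (Suc (m + k)) * dV (m + k) ((Dx N ^^ k) F) x t w)"
    using depends_upto_mono[OF depends_upto_Dx[OF G]] depends_upto_mono[OF depends_upto_dV[OF G]]
    by (intro depends_upto_add depends_upto_mult depends_upto_coord) auto
  ultimately show ?case
    by simp
qed

lemma dV_Dx_pow:
  assumes "depends_upto m F" "m + k \<le> N"
  shows "dV (m + k) ((Dx N ^^ k) F) x t w = dV m F x t w"
  using assms(2)
proof (induction k arbitrary: x t w)
  case 0
  then show ?case by simp
next
  case (Suc k)
  define G where "G = (Dx N ^^ k) F"
  have G: "depends_upto (m + k) G"
    unfolding G_def using Suc.prems by (intro depends_upto_Dx_pow[OF assms(1)]) simp
  have "dV (m + Suc k) ((Dx N ^^ Suc k) F) x t w = dV (m + k) G x t w"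
  proof (rule dV_affine[OF depends_upto_Dx[OF G] depends_upto_dV[OF G]])
    show "(Dx N ^^ Suc k) F x t w = Dx (m + k) G x t w + w (m + Suc k) * dV (m + k) G x t w"
      for x t w
      using Dx_eq_leading_term[OF G, of N] Suc.prems by (simp add: G_def)
  qed simp
  with Suc show ?case
    by (simp add: G_def)
qed

lemma Dx_pow_leading_term:
  assumes F: "depends_upto m F" and "0 < k" "m + k \<le> N"
  shows "\<exists>P. depends_upto (m + k - 1) P \<and>
    (\<forall>x t w. (Dx N ^^ k) F x t w = P x t w + w (m + k) * dV m F x t w)"
proof -
  obtain j where k: "k = Suc j"
    using \<open>0 < k\<close> gr0_implies_Suc by blast
  define G where "G = (Dx N ^^ j) F"
  have G: "depends_upto (m + j) G"
    unfolding G_def using assms k by (intro depends_upto_Dx_pow[OF F]) simp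
  have "(Dx N ^^ k) F x t w = Dx (m + j) G x t w + w (m + k) * dV m F x t w" for x t w
    using Dx_eq_leading_term[OF G, of N] dV_Dx_pow[OF F, of j N] assms k by (simp add: G_def)
  with depends_upto_Dx[OF G] k show ?thesis
    by (intro exI[of _ "Dx (m + j) G"]) simp
qed

lemma Dt_evol_leading_term:
  assumes S: "depends_upto n S" and R: "depends_upto r R" and "0 < n" "0 < r" "n + r \<le> N"
  obtains A where "depends_upto (n + r - 1) A"
    "\<And>x t w. Dt_evol N R S x t w = A x t w + w (n + r) * (dV r R x t w * dV n S x t w)"
proof -
  obtain P where P: "depends_upto (r + n - 1) P"
    "\<And>x t w. (Dx N ^^ n) R x t w = P x t w + w (r + n) * dV r R x t w"
    using Dx_pow_leading_term[OF R \<open>0 < n\<close>, of N] assms(5) by (auto simp: add.commute)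
  define A where "A = (\<lambda>x t w. dT S x t w + (\<Sum>k<n. (Dx N ^^ k) R x t w * dV k S x t w)
    + P x t w * dV n S x t w)"
  have "depends_upto (n + r - 1) (\<lambda>x t w. (Dx N ^^ k) R x t w * dV k S x t w)" if "k < n" for k
    using that assms depends_upto_mono[OF depends_upto_Dx_pow[OF R, of k N]]
      depends_upto_mono[OF depends_upto_dV[OF S]]
    by (intro depends_upto_mult) auto
  moreover have "depends_upto (n + r - 1) (\<lambda>x t w. P x t w * dV n S x t w)"
    using P(1) assms by (intro depends_upto_mult depends_upto_mono[OF depends_upto_dV[OF S]])
      (auto simp: add.commute)
  ultimately have "depends_upto (n + r - 1) A"
    unfolding A_def using assms depends_upto_mono[OF depends_upto_dT[OF S]]
    by (intro depends_upto_add depends_upto_sum) auto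
  moreover have "Dt_evol N R S x t w = A x t w + w (n + r) * (dV r R x t w * dV n S x t w)"
    for x t w
  proof -
    have "(\<Sum>k<N. (Dx N ^^ k) R x t w * dV k S x t w)
        = (\<Sum>k<Suc n. (Dx N ^^ k) R x t w * dV k S x t w)"
      using assms by (intro sum.mono_neutral_right) (auto simp: dV_eq_0_above[OF S])
    then have "Dt_evol N R S x t w = dT S x t w + (\<Sum>k<Suc n. (Dx N ^^ k) R x t w * dV k S x t w)"
      unfolding Dt_evol_def by (simp only:)
    also have "\<dots> = dT S x t w + (\<Sum>k<n. (Dx N ^^ k) R x t w * dV k S x t w)
        + (Dx N ^^ n) R x t w * dV n S x t w"
      by (simp only: sum.lessThan_Suc add.assoc)
    also have "\<dots> = A x t w + w (n + r) * (dV r R x t w * dV n S x t w)"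
      unfolding A_def P(2) by (simp only: distrib_right add.assoc mult.assoc add.commute[of r n])
    finally show ?thesis .
  qed
  ultimately show thesis by (rule that)
qed

lemma dV_fun_upd: "dV k F x t (w(k := z)) = deriv (\<lambda>y. F x t (w(k := y))) z"
  by (simp add: dV_def)

section \<open>Functions of one complex variable\<close>

lemma has_field_derivative_zero_if_locally_constant:
  fixes f :: "'a::real_normed_field \<Rightarrow> 'a"
  assumes "(f has_field_derivative D) (at z)" "open A" "z \<in> A" "\<And>y. y \<in> A \<Longrightarrow> f y = c"
  shows "D = 0"
proof -
  have "((\<lambda>y. c) has_field_derivative D) (at z)"
    using assms by (intro has_field_derivative_transform_within_open[OF assms(1-3)]) simp
  then show ?thesis
    using DERIV_const DERIV_unique by blast
qed

lemma has_field_derivative_zero_if_power_locally_constant: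
  fixes f :: "'a::real_normed_field \<Rightarrow> 'a"
  assumes f': "(f has_field_derivative D) (at z)" and A: "open A" "z \<in> A"
    and const: "\<And>y. y \<in> A \<Longrightarrow> f y ^ m = c" and "0 < m"
  shows "D = 0"
proof (rule ccontr)
  assume "D \<noteq> 0"
  have "((\<lambda>y. f y ^ m) has_field_derivative of_nat m * f z ^ (m - 1) * D) (at z)"
    using f' by (auto intro!: derivative_eq_intros)
  then have "of_nat m * f z ^ (m - 1) * D = 0"
    using A const by (rule has_field_derivative_zero_if_locally_constant)
  with \<open>D \<noteq> 0\<close> \<open>0 < m\<close> have "f z ^ (m - 1) = 0"
    by simp
  then have "f z = 0" "m \<noteq> 1"
    by auto
  then have "c = 0"
    using const[OF A(2)] \<open>0 < m\<close> by (simp add: zero_power)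
  then have "f y = 0" if "y \<in> A" for y
    using const[OF that] by simp
  then have "D = 0"
    by (rule has_field_derivative_zero_if_locally_constant[OF f' A])
  with \<open>D \<noteq> 0\<close> show False ..
qed

lemma holomorphic_deriv_zero_imp_eq:
  assumes "f holomorphic_on A" "open A" "convex A" "\<And>z. z \<in> A \<Longrightarrow> deriv f z = 0"
    and "a \<in> A" "b \<in> A"
  shows "f a = f b"
proof -
  have "(f has_field_derivative 0) (at z within A)" if "z \<in> A" for z
    using holomorphic_derivI[OF assms(1,2) that] assms(4)[OF that] by simp
  then obtain c where "\<And>z. z \<in> A \<Longrightarrow> f z = c"
    using has_field_derivative_zero_constant[OF assms(3)] by blast
  then show ?thesis
    using assms(5,6) by simp
qed

lemma continuous_zero_off_zeros_of_holomorphic: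
  fixes f h :: "complex \<Rightarrow> complex"
  assumes f: "f holomorphic_on A" "open A" "connected A" "z0 \<in> A" "f z0 \<noteq> 0"
    and h: "continuous_on A h" "\<And>z. z \<in> A \<Longrightarrow> f z \<noteq> 0 \<Longrightarrow> h z = 0"
    and "z \<in> A"
  shows "h z = 0"
proof (rule ccontr)
  assume "h z \<noteq> 0"
  define V where "V = A \<inter> h -` (- {0})"
  have "open V"
    unfolding V_def using h(1) \<open>open A\<close> by (rule continuous_open_preimage) (simp add: open_Compl)
  moreover have "V \<noteq> {}" "V \<subseteq> A"
    using \<open>z \<in> A\<close> \<open>h z \<noteq> 0\<close> by (auto simp: V_def)
  moreover have "f y = 0" if "y \<in> V" for y
    using h(2) that unfolding V_def by blast
  ultimately have "f z0 = 0"
    using analytic_continuation_open[of V A f "\<lambda>_. 0" z0] f holomorphic_on_const by blast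
  with \<open>f z0 \<noteq> 0\<close> show False ..
qed

lemma affine_coeffs_eq_on_open:
  fixes a b a' b' :: complex
  assumes "open A" "z \<in> A" "\<And>y. y \<in> A \<Longrightarrow> a + y * b = a' + y * b'"
  shows "b = b'"
proof -
  obtain e where "0 < e" "ball z e \<subseteq> A"
    using assms(1,2) openE by blast
  define y where "y = z + of_real (e / 2)"
  have "y \<in> A" "y \<noteq> z"
    using \<open>0 < e\<close> \<open>ball z e \<subseteq> A\<close> by (auto simp: y_def dist_norm)
  have "(z - y) * (b - b') = (a + z * b - (a' + z * b')) - (a + y * b - (a' + y * b'))"
    by (simp add: algebra_simps)
  also have "\<dots> = 0"
    using assms(2,3) \<open>y \<in> A\<close> by simp
  finally show ?thesis
    using \<open>y \<noteq> z\<close> by simp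
qed

lemma powr_half_nat_power2:
  fixes a :: complex
  assumes "0 < k"
  shows "(a powr (of_nat k / 2)) ^ 2 = a ^ k"
proof (cases "a = 0")
  case True
  with assms show ?thesis by simp
next
  case False
  have "(a powr (of_nat k / 2)) ^ 2 = exp (of_nat k / 2 * ln a) ^ 2"
    using False by (simp add: powr_def)
  also have "\<dots> = exp (of_nat 2 * (of_nat k / 2 * ln a))"
    by (simp only: exp_of_nat_mult)
  also have "\<dots> = exp (of_nat k * ln a)"
    by simp
  also have "\<dots> = a ^ k"
    using False by (simp only: exp_of_nat_mult) simp
  finally show ?thesis .
qed

section \<open>Product neighbourhoods in the jet space\<close>

(* The slice of a product neighbourhood in a single variable is the corresponding factor, so with
   convex factors one-variable complex analysis applies along every coordinate. *)
definition jet_box ::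
    "complex set \<Rightarrow> complex set \<Rightarrow> (nat \<Rightarrow> complex set) \<Rightarrow> (complex \<times> complex \<times> (nat \<Rightarrow> complex)) set"
  where "jet_box X T W = {(x, t, w). x \<in> X \<and> t \<in> T \<and> (\<forall>k. w k \<in> W k)}"

lemma mem_jet_box [simp]: "(x, t, w) \<in> jet_box X T W \<longleftrightarrow> x \<in> X \<and> t \<in> T \<and> (\<forall>k. w k \<in> W k)"
  by (simp add: jet_box_def)

lemma holomorphic_on_jet_box_slice:
  assumes "jet_box X T W \<subseteq> U" "(x, t, w) \<in> jet_box X T W"
    and "(\<lambda>z. F x t (w(k := z))) holomorphic_on {z. (x, t, w(k := z)) \<in> U}"
  shows "(\<lambda>z. F x t (w(k := z))) holomorphic_on W k"
  using assms(3) by (rule holomorphic_on_subset) (use assms(1,2) in force)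

lemma Dx_pow_cong_on_jet_box:
  assumes "open X" "\<And>k. open (W k)"
    and FG: "\<And>x t w. (x, t, w) \<in> jet_box X T W \<Longrightarrow> F x t w = G x t w"
  shows "(x, t, w) \<in> jet_box X T W \<Longrightarrow> (Dx N ^^ j) F x t w = (Dx N ^^ j) G x t w"
proof (induction j arbitrary: x t w)
  case 0
  then show ?case using FG by simp
next
  case (Suc j)
  have "dX ((Dx N ^^ j) F) x t w = dX ((Dx N ^^ j) G) x t w"
    unfolding dX_def
  proof (rule deriv_cong_ev[OF _ refl])
    show "\<forall>\<^sub>F y in nhds x. (Dx N ^^ j) F y t w = (Dx N ^^ j) G y t w"
      using eventually_nhds_in_open[OF \<open>open X\<close>] Suc by (force elim: eventually_mono)
  qed
  moreover have "dV k ((Dx N ^^ j) F) x t w = dV k ((Dx N ^^ j) G) x t w" for k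
    unfolding dV_def
  proof (rule deriv_cong_ev[OF _ refl])
    show "\<forall>\<^sub>F z in nhds (w k). (Dx N ^^ j) F x t (w(k := z)) = (Dx N ^^ j) G x t (w(k := z))"
      using eventually_nhds_in_open[OF \<open>open (W k)\<close>] Suc by (force elim: eventually_mono)
  qed
  ultimately show ?case
    by (simp add: Dx_def[of N "(Dx N ^^ j) F"] Dx_def[of N "(Dx N ^^ j) G"])
qed

lemma jet_box_mono:
  "X \<subseteq> X' \<Longrightarrow> T \<subseteq> T' \<Longrightarrow> (\<And>k. W k \<subseteq> W' k) \<Longrightarrow> jet_box X T W \<subseteq> jet_box X' T' W'"
  unfolding jet_box_def by blast

lemma open_contains_jet_box:
  assumes "open U" "(x0, t0, w0) \<in> U"
  obtains e K where "0 < e" "finite K"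
    "jet_box (ball x0 e) (ball t0 e) (\<lambda>k. if k \<in> K then ball (w0 k) e else UNIV) \<subseteq> U"
proof -
  obtain \<epsilon> where \<epsilon>: "0 < \<epsilon>" "ball (x0, t0, w0) \<epsilon> \<subseteq> U"
    using assms openE by blast
  obtain M where M: "(1 / 2 :: real) ^ M < \<epsilon> / 8"
    using real_arch_pow_inv[of "\<epsilon> / 8" "1 / 2"] \<epsilon>(1) by auto
  define e where "e = \<epsilon> / 16"
  define K where "K = (from_nat ` {..M} :: nat set)"
  have "(x, t, w) \<in> U"
    if "(x, t, w) \<in> jet_box (ball x0 e) (ball t0 e) (\<lambda>k. if k \<in> K then ball (w0 k) e else UNIV)"
    for x t w
  proof -
    have near: "dist x0 x < e" "dist t0 t < e" "\<And>k. k \<in> K \<Longrightarrow> dist (w0 k) (w k) < e"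
      using that by (auto simp: mem_ball) (metis mem_ball)
    have "{dist (w0 (from_nat i)) (w (from_nat i)) | i. i \<le> M}
        = (\<lambda>i. dist (w0 (from_nat i)) (w (from_nat i))) ` {..M}"
      by auto
    then have "Max {dist (w0 (from_nat i)) (w (from_nat i)) | i. i \<le> M} < e"
      using near(3) by (simp add: K_def Max_less_iff)
    then have "dist w0 w < \<epsilon> / 4"
      using dist_fun_le_dist_first_terms[of w0 w M] M by (simp add: e_def)
    then have "dist (t0, w0) (t, w) < \<epsilon> / 2"
      using near(2) \<epsilon>(1) unfolding dist_Pair_Pair e_def
      by (intro sqrt_sum_squares_half_less) auto
    then have "dist (x0, t0, w0) (x, t, w) < \<epsilon>"
      using near(1) \<epsilon>(1) unfolding dist_Pair_Pair[of x0 "(t0, w0)"] e_def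
      by (intro sqrt_sum_squares_half_less) auto
    with \<epsilon>(2) show ?thesis
      by auto
  qed
  moreover have "0 < e" "finite K"
    using \<epsilon>(1) by (simp_all add: e_def K_def)
  ultimately show thesis
    by (intro that) auto
qed

(* S is only separately holomorphic, so it is its joint continuity that carries the
   non-constancy along v_n from the slice through the base point to all nearby slices. *)
lemma continuous_separates_nearby_slices:
  fixes S :: jfun
  assumes U: "open U" "continuous_on U (\<lambda>(x, t, w). S x t w)"
    and p0: "(x0, t0, w0) \<in> U" and p1: "(x0, t0, w0(n := z1)) \<in> U"
    and ne: "S x0 t0 w0 \<noteq> S x0 t0 (w0(n := z1))"
  obtains e K where "0 < e"
    "\<And>x t w. (x, t, w(n := w0 n))
        \<in> jet_box (ball x0 e) (ball t0 e) (\<lambda>k. if k \<in> K then ball (w0 k) e else UNIV)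
      \<Longrightarrow> S x t (w(n := w0 n)) \<noteq> S x t (w(n := z1))"
proof -
  define d where "d = dist (S x0 t0 w0) (S x0 t0 (w0(n := z1)))"
  define V where "V c = U \<inter> (\<lambda>(x, t, w). S x t w) -` ball c (d / 2)" for c
  have "0 < d"
    using ne by (simp add: d_def)
  have "open (V c)" for c
    unfolding V_def using U by (intro continuous_open_preimage) auto
  moreover have "(x0, t0, w0) \<in> V (S x0 t0 w0)"
    using p0 \<open>0 < d\<close> by (simp add: V_def)
  ultimately obtain e0 K0 where e0: "0 < e0" "finite K0"
    "jet_box (ball x0 e0) (ball t0 e0) (\<lambda>k. if k \<in> K0 then ball (w0 k) e0 else UNIV)
      \<subseteq> V (S x0 t0 w0)"
    by (rule open_contains_jet_box)
  have "(x0, t0, w0(n := z1)) \<in> V (S x0 t0 (w0(n := z1)))"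
    using p1 \<open>0 < d\<close> by (simp add: V_def)
  with \<open>open (V _)\<close> obtain e1 K1 where e1: "0 < e1" "finite K1"
    "jet_box (ball x0 e1) (ball t0 e1) (\<lambda>k. if k \<in> K1 then ball ((w0(n := z1)) k) e1 else UNIV)
      \<subseteq> V (S x0 t0 (w0(n := z1)))"
    by (rule open_contains_jet_box)
  show thesis
  proof (rule that[of "min e0 e1" "K0 \<union> K1"])
    show "0 < min e0 e1"
      using e0 e1 by simp
    fix x t w
    assume box: "(x, t, w(n := w0 n)) \<in> jet_box (ball x0 (min e0 e1)) (ball t0 (min e0 e1))
      (\<lambda>k. if k \<in> K0 \<union> K1 then ball (w0 k) (min e0 e1) else UNIV)"
    have "(x, t, w(n := w0 n)) \<in> V (S x0 t0 w0)"
      using box by (intro subsetD[OF e0(3)]) (auto split: if_splits)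
    moreover have "(x, t, w(n := z1)) \<in> V (S x0 t0 (w0(n := z1)))"
      using box e1(1) by (intro subsetD[OF e1(3)]) (auto split: if_splits)
    ultimately have "dist (S x0 t0 w0) (S x t (w(n := w0 n))) < d / 2"
      "dist (S x0 t0 (w0(n := z1))) (S x t (w(n := z1))) < d / 2"
      by (simp_all add: V_def)
    then show "S x t (w(n := w0 n)) \<noteq> S x t (w(n := z1))"
      using dist_triangle[of "S x0 t0 w0" "S x0 t0 (w0(n := z1))" "S x t (w(n := z1))"]
      by (auto simp: d_def dist_commute)
  qed
qed

lemma exists_dV_ne_0_if_slice_nonconstant:
  assumes "(\<lambda>z. F x t (w(k := z))) holomorphic_on A" "open A" "convex A" "a \<in> A" "b \<in> A"
    and "F x t (w(k := a)) \<noteq> F x t (w(k := b))"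
  shows "\<exists>z\<in>A. dV k F x t (w(k := z)) \<noteq> 0"
  using holomorphic_deriv_zero_imp_eq[OF assms(1-3) _ assms(4,5)] assms(6)
  by (auto simp: dV_fun_upd)

lemma exists_nondegenerate_jet_box:
  fixes S :: jfun
  assumes U: "open U" "continuous_on U (\<lambda>(x, t, w). S x t w)"
    and S_hol: "\<And>x t w. (x, t, w) \<in> U \<Longrightarrow>
      (\<lambda>z. S x t (w(n := z))) holomorphic_on {z. (x, t, w(n := z)) \<in> U}"
    and p0: "(x0, t0, w0) \<in> U" "dV n S x0 t0 w0 \<noteq> 0"
  obtains X T W where "open X" "\<And>k. open (W k)" "\<And>k. convex (W k)"
    "(x0, t0, w0) \<in> jet_box X T W" "jet_box X T W \<subseteq> U"
    "\<And>x t w. (x, t, w) \<in> jet_box X T W \<Longrightarrow> \<exists>z\<in>W n. dV n S x t (w(n := z)) \<noteq> 0"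
proof -
  obtain e0 K0 where e0: "0 < e0"
    "jet_box (ball x0 e0) (ball t0 e0) (\<lambda>k. if k \<in> K0 then ball (w0 k) e0 else UNIV) \<subseteq> U"
    using open_contains_jet_box[OF U(1) p0(1)] by blast
  from e0(1) have "(x0, t0, w0)
      \<in> jet_box (ball x0 e0) (ball t0 e0) (\<lambda>k. if k \<in> K0 then ball (w0 k) e0 else UNIV)"
    by simp
  from holomorphic_on_jet_box_slice[where F = S and k = n, OF e0(2) this S_hol[OF p0(1)]]
  have "(\<lambda>z. S x0 t0 (w0(n := z))) holomorphic_on ball (w0 n) e0"
    by (rule holomorphic_on_subset) auto
  then have "((\<lambda>z. S x0 t0 (w0(n := z))) has_field_derivative dV n S x0 t0 w0) (at (w0 n))"
    using holomorphic_derivI[OF _ open_ball, of _ "w0 n" e0 "w0 n" UNIV] e0(1) by (simp add: dV_def)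
  then obtain z1 where z1: "z1 \<in> ball (w0 n) e0" "S x0 t0 w0 \<noteq> S x0 t0 (w0(n := z1))"
    using has_field_derivative_zero_if_locally_constant[OF _ open_ball, of _ _ "w0 n" "w0 n" e0]
      p0(2) e0(1) by (metis centre_in_ball fun_upd_triv)
  have "(x0, t0, w0(n := z1)) \<in> U"
    using e0 z1(1) by (auto split: if_splits)
  then obtain e1 K1 where e1: "0 < e1"
    "\<And>x t w. (x, t, w(n := w0 n))
        \<in> jet_box (ball x0 e1) (ball t0 e1) (\<lambda>k. if k \<in> K1 then ball (w0 k) e1 else UNIV)
      \<Longrightarrow> S x t (w(n := w0 n)) \<noteq> S x t (w(n := z1))"
    using continuous_separates_nearby_slices[OF U p0(1) _ z1(2)] by blast
  define e where "e = min e0 e1"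
  define W where "W k = (if k = n then ball (w0 n) e0 else if k \<in> K0 \<union> K1 then ball (w0 k) e else UNIV)"
    for k
  have box: "jet_box (ball x0 e) (ball t0 e) W \<subseteq> U"
    using e0(2) by (rule order_trans[rotated]) (intro jet_box_mono; auto simp: W_def e_def)
  have W_open: "open (W k)" and W_convex: "convex (W k)" for k
    by (simp_all add: W_def)
  show thesis
  proof (rule that[of "ball x0 e" W "ball t0 e"])
    show "(x0, t0, w0) \<in> jet_box (ball x0 e) (ball t0 e) W"
      using e0(1) e1(1) by (simp add: W_def e_def)
    fix x t w
    assume p: "(x, t, w) \<in> jet_box (ball x0 e) (ball t0 e) W"
    have "(w(n := w0 n)) k \<in> (if k \<in> K1 then ball (w0 k) e1 else UNIV)" for k
      using p[simplified, THEN conjunct2, THEN conjunct2, rule_format, of k] e1(1)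
      by (cases "k = n") (auto simp: W_def e_def)
    with p have "S x t (w(n := w0 n)) \<noteq> S x t (w(n := z1))"
      by (intro e1(2)) (simp add: e_def)
    then show "\<exists>z\<in>W n. dV n S x t (w(n := z)) \<noteq> 0"
      using e0(1) z1(1)
      by (intro exists_dV_ne_0_if_slice_nonconstant[where F = S and k = n, OF
            holomorphic_on_jet_box_slice[where F = S and k = n, OF box p S_hol[OF subsetD[OF box p]]]
            W_open W_convex])
        (simp_all add: W_def)
  qed (use box W_open W_convex in simp_all)
qed

section \<open>Comparison of leading terms\<close>

locale miura_jet_box =
  fixes S :: jfun and n N :: nat
    and X T :: "complex set" and W :: "nat \<Rightarrow> complex set"
    and x0 t0 :: complex and w0 :: "nat \<Rightarrow> complex"
  assumes order_ge_6: "6 \<le> n"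
    and S_depends: "depends_upto n S"
    and open_X: "open X" and open_W: "open (W k)" and convex_W: "convex (W k)"
    and center_mem: "(x0, t0, w0) \<in> jet_box X T W"
    and S_holomorphic: "(x, t, w) \<in> jet_box X T W \<Longrightarrow> (\<lambda>z. S x t (w(n := z))) holomorphic_on W n"
    and S_nondegenerate: "(x, t, w) \<in> jet_box X T W \<Longrightarrow> \<exists>z\<in>W n. dV n S x t (w(n := z)) \<noteq> 0"
begin

abbreviation nbhd where "nbhd \<equiv> jet_box X T W"

definition slice_holomorphic :: "jfun \<Rightarrow> bool" where
  "slice_holomorphic R \<longleftrightarrow>
    (\<forall>x t w k. (x, t, w) \<in> nbhd \<longrightarrow> (\<lambda>z. R x t (w(k := z))) holomorphic_on W k)"

definition solves_miura :: "jfun \<Rightarrow> bool" where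
  "solves_miura R \<longleftrightarrow> (\<forall>x t w. (x, t, w) \<in> nbhd \<longrightarrow>
    Dt_evol N R S x t w = S x t w powr (5 / 2) * (Dx N ^^ 5) S x t w)"

lemma connected_W: "connected (W k)"
  using convex_W by (rule convex_connected)

lemma slice_holomorphic_if_jet_analytic:
  assumes "nbhd \<subseteq> U" "jet_analytic m R U"
  shows "slice_holomorphic R"
  unfolding slice_holomorphic_def
proof (intro allI impI)
  fix x t w k
  assume p: "(x, t, w) \<in> nbhd"
  with assms(1) have "(x, t, w) \<in> U"
    by blast
  with assms(2) have "(\<lambda>z. R x t (w(k := z))) holomorphic_on {z. (x, t, w(k := z)) \<in> U}"
    unfolding jet_analytic_def by blast
  then show "(\<lambda>z. R x t (w(k := z))) holomorphic_on W k"
    by (rule holomorphic_on_jet_box_slice[OF assms(1) p])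
qed

lemma slice_holomorphic_upd_center:
  assumes "slice_holomorphic R"
  shows "slice_holomorphic (\<lambda>x t w. R x t (w(r := w0 r)))"
  unfolding slice_holomorphic_def
proof (intro allI impI)
  fix x t w k
  assume p: "(x, t, w) \<in> nbhd"
  show "(\<lambda>z. R x t (w(k := z, r := w0 r))) holomorphic_on W k"
  proof (cases "k = r")
    case False
    from p center_mem have "(x, t, w(r := w0 r)) \<in> nbhd"
      by simp
    with assms have "(\<lambda>z. R x t (w(r := w0 r, k := z))) holomorphic_on W k"
      unfolding slice_holomorphic_def by blast
    with False show ?thesis
      by (simp add: fun_upd_twist)
  qed simp
qed

lemma solves_miura_cong:
  assumes "solves_miura R" "\<And>x t w. (x, t, w) \<in> nbhd \<Longrightarrow> R' x t w = R x t w"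
  shows "solves_miura R'"
  unfolding solves_miura_def
proof (intro allI impI)
  fix x t w
  assume p: "(x, t, w) \<in> nbhd"
  have "(Dx N ^^ k) R' x t w = (Dx N ^^ k) R x t w" for k
    by (rule Dx_pow_cong_on_jet_box[OF open_X open_W assms(2) p])
  then have "Dt_evol N R' S x t w = Dt_evol N R S x t w"
    by (simp add: Dt_evol_def)
  also have "\<dots> = S x t w powr (5 / 2) * (Dx N ^^ 5) S x t w"
    using assms(1) p unfolding solves_miura_def by blast
  finally show "Dt_evol N R' S x t w = S x t w powr (5 / 2) * (Dx N ^^ 5) S x t w" .
qed

lemma leading_coeffs_eq:
  assumes "depends_upto m A" "depends_upto m B" "depends_upto m A'" "depends_upto m B'" "m < j"
    and eq: "\<And>x t w. (x, t, w) \<in> nbhd \<Longrightarrow> A x t w + w j * B x t w = A' x t w + w j * B' x t w"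
    and p: "(x, t, w) \<in> nbhd"
  shows "B x t w = B' x t w"
proof (rule affine_coeffs_eq_on_open[OF open_W])
  show "w j \<in> W j"
    using p by simp
  fix y
  assume "y \<in> W j"
  with p have "(x, t, w(j := y)) \<in> nbhd"
    by simp
  from eq[OF this] show "A x t w + y * B x t w = A' x t w + y * B' x t w"
    using assms(1-5) by (simp add: depends_upto_upd_eq)
qed

lemma leading_coeff_eq_0:
  assumes R: "depends_upto r R" "6 \<le> r" "n + r \<le> N" "solves_miura R"
    and p: "(x, t, w) \<in> nbhd"
  shows "dV r R x t w * dV n S x t w = 0"
proof -
  obtain A where A: "depends_upto (n + r - 1) A"
    "\<And>x t w. Dt_evol N R S x t w = A x t w + w (n + r) * (dV r R x t w * dV n S x t w)"
    using Dt_evol_leading_term[OF S_depends R(1)] order_ge_6 R by auto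
  have "depends_upto (n + r - 1) (\<lambda>x t w. S x t w powr (5 / 2))"
    using R(2) by (intro depends_upto_comp[OF depends_upto_mono[OF S_depends]]) simp
  moreover have "depends_upto (n + r - 1) ((Dx N ^^ 5) S)"
    using R by (intro depends_upto_mono[OF depends_upto_Dx_pow[OF S_depends]]) auto
  ultimately have RHS:
    "depends_upto (n + r - 1) (\<lambda>x t w. S x t w powr (5 / 2) * (Dx N ^^ 5) S x t w)"
    by (rule depends_upto_mult)
  have B: "depends_upto (n + r - 1) (\<lambda>x t w. dV r R x t w * dV n S x t w)"
    using R(2) order_ge_6
    by (intro depends_upto_mult depends_upto_mono[OF depends_upto_dV[OF R(1)]]
        depends_upto_mono[OF depends_upto_dV[OF S_depends]]) auto
  have zero: "depends_upto (n + r - 1) (\<lambda>_ _ _. 0)"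
    by (simp add: depends_upto_def)
  have eq: "A x t w + w (n + r) * (dV r R x t w * dV n S x t w)
      = S x t w powr (5 / 2) * (Dx N ^^ 5) S x t w + w (n + r) * 0"
    if "(x, t, w) \<in> nbhd" for x t w
  proof -
    from R(4) that have "Dt_evol N R S x t w = S x t w powr (5 / 2) * (Dx N ^^ 5) S x t w"
      unfolding solves_miura_def by blast
    then show ?thesis
      by (simp add: A(2))
  qed
  have "n + r - 1 < n + r"
    using order_ge_6 by simp
  from leading_coeffs_eq[OF A(1) B RHS zero this eq p] show ?thesis
    by simp
qed

lemma leading_coeff_order_5:
  assumes R: "depends_upto 5 R" "n + 5 \<le> N" "solves_miura R"
    and p: "(x, t, w) \<in> nbhd"
  shows "dV 5 R x t w * dV n S x t w = S x t w powr (5 / 2) * dV n S x t w"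
proof -
  obtain A where A: "depends_upto (n + 5 - 1) A"
    "\<And>x t w. Dt_evol N R S x t w = A x t w + w (n + 5) * (dV 5 R x t w * dV n S x t w)"
    by (rule Dt_evol_leading_term[OF S_depends R(1)]) (use order_ge_6 R in auto)
  obtain P where P: "depends_upto (n + 5 - 1) P"
    "\<And>x t w. (Dx N ^^ 5) S x t w = P x t w + w (n + 5) * dV n S x t w"
    using Dx_pow_leading_term[OF S_depends _ R(2)] by auto
  have S_pow: "depends_upto (n + 4) (\<lambda>x t w. S x t w powr (5 / 2))"
    by (intro depends_upto_comp[OF depends_upto_mono[OF S_depends]]) simp
  have dV_S: "depends_upto (n + 4) (dV n S)"
    by (intro depends_upto_mono[OF depends_upto_dV[OF S_depends]]) simp
  show ?thesis
  proof (rule leading_coeffs_eq[where m = "n + 4" and j = "n + 5", OF _ _ _ _ _ _ p])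
    show "depends_upto (n + 4) A"
      using A(1) by (simp add: add.commute)
    show "depends_upto (n + 4) (\<lambda>x t w. dV 5 R x t w * dV n S x t w)"
      using order_ge_6 dV_S
      by (intro depends_upto_mult depends_upto_mono[OF depends_upto_dV[OF R(1)]]) auto
    show "depends_upto (n + 4) (\<lambda>x t w. S x t w powr (5 / 2) * P x t w)"
      using S_pow P(1) by (intro depends_upto_mult) (simp_all add: add.commute)
    show "depends_upto (n + 4) (\<lambda>x t w. S x t w powr (5 / 2) * dV n S x t w)"
      using S_pow dV_S by (rule depends_upto_mult)
    fix x t w
    assume "(x, t, w) \<in> nbhd"
    with R(3) have "Dt_evol N R S x t w = S x t w powr (5 / 2) * (Dx N ^^ 5) S x t w"
      unfolding solves_miura_def by blast
    then show "A x t w + w (n + 5) * (dV 5 R x t w * dV n S x t w)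
        = S x t w powr (5 / 2) * P x t w + w (n + 5) * (S x t w powr (5 / 2) * dV n S x t w)"
      by (simp add: A(2) P(2) algebra_simps)
  qed simp
qed

lemma zero_on_slice_if_zero_where_dV_ne_0:
  fixes h :: "complex \<Rightarrow> complex"
  assumes p: "(x, t, w) \<in> nbhd" and h: "continuous_on (W n) h"
    and zero: "\<And>z. z \<in> W n \<Longrightarrow> dV n S x t (w(n := z)) \<noteq> 0 \<Longrightarrow> h z = 0"
    and "z \<in> W n"
  shows "h z = 0"
proof -
  define g where "g = (\<lambda>z. S x t (w(n := z)))"
  have "g holomorphic_on W n"
    using S_holomorphic[OF p] by (simp add: g_def)
  obtain z0 where z0: "z0 \<in> W n" "deriv g z0 \<noteq> 0"
    using S_nondegenerate[OF p] by (auto simp: g_def dV_fun_upd)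
  show ?thesis
  proof (rule continuous_zero_off_zeros_of_holomorphic[where f = "deriv g",
        OF _ open_W connected_W z0 h _ \<open>z \<in> W n\<close>])
    show "deriv g holomorphic_on W n"
      using holomorphic_deriv[OF \<open>g holomorphic_on W n\<close> open_W] .
    fix y
    assume "y \<in> W n" "deriv g y \<noteq> 0"
    then show "h y = 0"
      using zero by (simp add: g_def dV_fun_upd)
  qed
qed

lemma eq_at_center_if_dV_zero:
  assumes "slice_holomorphic R" "(x, t, w) \<in> nbhd"
    and "\<And>z. z \<in> W r \<Longrightarrow> dV r R x t (w(r := z)) = 0"
  shows "R x t w = R x t (w(r := w0 r))"
proof -
  have "(\<lambda>z. R x t (w(r := z))) holomorphic_on W r"
    using assms(1,2) unfolding slice_holomorphic_def by blast
  moreover have "w r \<in> W r" "w0 r \<in> W r"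
    using assms(2) center_mem by simp_all
  ultimately have "R x t (w(r := w r)) = R x t (w(r := w0 r))"
    using holomorphic_deriv_zero_imp_eq[of "\<lambda>z. R x t (w(r := z))" "W r" "w r" "w0 r"]
      open_W convex_W assms(3) by (simp add: dV_fun_upd)
  then show ?thesis
    by simp
qed

lemma dV_eq_0_below_order:
  assumes "depends_upto r R" "r < n"
    and zero: "\<And>x t w. (x, t, w) \<in> nbhd \<Longrightarrow> dV r R x t w * dV n S x t w = 0"
    and p: "(x, t, w) \<in> nbhd"
  shows "dV r R x t w = 0"
proof -
  obtain z where z: "z \<in> W n" "dV n S x t (w(n := z)) \<noteq> 0"
    using S_nondegenerate[OF p] by blast
  with p have "dV r R x t (w(n := z)) = 0"
    using zero[of x t "w(n := z)"] by simp
  then show ?thesis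
    using depends_upto_upd_eq[OF depends_upto_dV[OF assms(1)] assms(2)] by simp
qed

lemma dV_order_eq_0:
  assumes "slice_holomorphic R"
    and zero: "\<And>x t w. (x, t, w) \<in> nbhd \<Longrightarrow> dV n R x t w * dV n S x t w = 0"
    and p: "(x, t, w) \<in> nbhd"
  shows "dV n R x t w = 0"
proof -
  define g where "g = (\<lambda>z. R x t (w(n := z)))"
  have "g holomorphic_on W n"
    using assms(1) p unfolding g_def slice_holomorphic_def by blast
  then have "continuous_on (W n) (deriv g)"
    using holomorphic_deriv[OF _ open_W] holomorphic_on_imp_continuous_on by blast
  moreover have "deriv g z = 0" if "z \<in> W n" "dV n S x t (w(n := z)) \<noteq> 0" for z
    using that p zero[of x t "w(n := z)"] by (simp add: g_def dV_fun_upd)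
  moreover have "w n \<in> W n"
    using p by simp
  ultimately have "deriv g (w n) = 0"
    by (rule zero_on_slice_if_zero_where_dV_ne_0[OF p])
  then show ?thesis
    by (simp add: g_def dV_def)
qed

(* dV r R need not be continuous along the v_n-slice (holomorphy is only assumed separately in
   each variable), so the identity theorem is applied to values of R instead. *)
lemma eq_at_center_above_order:
  assumes "slice_holomorphic R" "n < r"
    and zero: "\<And>x t w. (x, t, w) \<in> nbhd \<Longrightarrow> dV r R x t w * dV n S x t w = 0"
    and p: "(x, t, w) \<in> nbhd"
  shows "R x t w = R x t (w(r := w0 r))"
proof -
  define h where "h = (\<lambda>z. R x t (w(n := z)) - R x t (w(r := w0 r, n := z)))"
  from p center_mem have "(x, t, w(r := w0 r)) \<in> nbhd"
    by simp
  then have "(\<lambda>z. R x t (w(n := z))) holomorphic_on W n"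
      "(\<lambda>z. R x t (w(r := w0 r, n := z))) holomorphic_on W n"
    using assms(1) p unfolding slice_holomorphic_def by blast+
  then have "continuous_on (W n) h"
    unfolding h_def by (intro continuous_on_diff holomorphic_on_imp_continuous_on)
  moreover have "h z = 0" if z: "z \<in> W n" "dV n S x t (w(n := z)) \<noteq> 0" for z
  proof -
    from p z(1) have q: "(x, t, w(n := z)) \<in> nbhd"
      by simp
    have "R x t (w(n := z)) = R x t (w(n := z, r := w0 r))"
    proof (rule eq_at_center_if_dV_zero[OF assms(1) q])
      fix y
      assume "y \<in> W r"
      with q have "(x, t, w(n := z, r := y)) \<in> nbhd"
        by simp
      moreover have "dV n S x t (w(n := z, r := y)) = dV n S x t (w(n := z))"
        using depends_upto_upd_eq[OF depends_upto_dV[OF S_depends] \<open>n < r\<close>] .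
      ultimately show "dV r R x t (w(n := z, r := y)) = 0"
        using zero z(2) by fastforce
    qed
    with \<open>n < r\<close> show "h z = 0"
      by (simp add: h_def fun_upd_twist)
  qed
  moreover have "w n \<in> W n"
    using p by simp
  ultimately have "h (w n) = 0"
    by (rule zero_on_slice_if_zero_where_dV_ne_0[OF p])
  moreover have "w(r := w0 r, n := w n) = w(r := w0 r)"
    using \<open>n < r\<close> by (simp add: fun_upd_idem)
  ultimately show ?thesis
    by (simp add: h_def)
qed

lemma eq_at_center_if_leading_coeff_eq_0:
  assumes "depends_upto r R" "slice_holomorphic R"
    and zero: "\<And>x t w. (x, t, w) \<in> nbhd \<Longrightarrow> dV r R x t w * dV n S x t w = 0"
    and p: "(x, t, w) \<in> nbhd"
  shows "R x t w = R x t (w(r := w0 r))"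
proof (cases "n < r")
  case True
  with assms show ?thesis
    by (intro eq_at_center_above_order)
next
  case False
  have "dV r R x t (w(r := z)) = 0" if "z \<in> W r" for z
  proof -
    from p that have q: "(x, t, w(r := z)) \<in> nbhd"
      by simp
    show ?thesis
    proof (cases "r = n")
      case True
      from zero q show ?thesis
        unfolding True by (rule dV_order_eq_0[OF assms(2)])
    next
      case False
      with \<open>\<not> n < r\<close> assms(1) zero q show ?thesis
        by (intro dV_eq_0_below_order) simp_all
    qed
  qed
  with assms(2) p show ?thesis
    by (rule eq_at_center_if_dV_zero)
qed

lemma solves_miura_reduce_order:
  assumes R: "depends_upto r R" "slice_holomorphic R" "solves_miura R" and "6 \<le> r" "n + r \<le> N"
  defines "R' \<equiv> \<lambda>x t w. R x t (w(r := w0 r))"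
  shows "depends_upto (r - 1) R'" "slice_holomorphic R'" "solves_miura R'"
proof -
  show "depends_upto (r - 1) R'"
    unfolding R'_def using R(1) by (rule depends_upto_upd_top)
  show "slice_holomorphic R'"
    unfolding R'_def using R(2) by (rule slice_holomorphic_upd_center)
  have "R' x t w = R x t w" if "(x, t, w) \<in> nbhd" for x t w
    unfolding R'_def using eq_at_center_if_leading_coeff_eq_0[OF R(1,2)
        leading_coeff_eq_0[OF R(1) \<open>6 \<le> r\<close> \<open>n + r \<le> N\<close> R(3)] that]
    by simp
  with R(3) show "solves_miura R'"
    by (rule solves_miura_cong)
qed

lemma no_solution_of_order_5:
  assumes "depends_upto 5 R" "n + 5 \<le> N" "solves_miura R"
  shows False
proof -
  define g where "g = (\<lambda>z. S x0 t0 (w0(n := z)))"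
  define K where "K = dV 5 R x0 t0 w0"
  have hol: "g holomorphic_on W n"
    using S_holomorphic[OF center_mem] by (simp add: g_def)
  have cont: "continuous_on (W n) (\<lambda>z. g z ^ 5 - K ^ 2)"
    using hol by (intro continuous_intros holomorphic_on_imp_continuous_on)
  have zero: "g z ^ 5 - K ^ 2 = 0" if z: "z \<in> W n" "dV n S x0 t0 (w0(n := z)) \<noteq> 0" for z
  proof -
    from center_mem z(1) have "(x0, t0, w0(n := z)) \<in> nbhd"
      by simp
    from leading_coeff_order_5[OF assms this] z(2)
    have "dV 5 R x0 t0 (w0(n := z)) = g z powr (5 / 2)"
      by (simp add: g_def)
    moreover have "dV 5 R x0 t0 (w0(n := z)) = K"
      using depends_upto_upd_eq[OF depends_upto_dV[OF assms(1)]] order_ge_6 by (simp add: K_def)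
    ultimately show ?thesis
      using powr_half_nat_power2[of 5 "g z"] by simp
  qed
  have "g z ^ 5 = K ^ 2" if "z \<in> W n" for z
    using zero_on_slice_if_zero_where_dV_ne_0[OF center_mem cont zero that] by simp
  moreover obtain z0 where z0: "z0 \<in> W n" "deriv g z0 \<noteq> 0"
    using S_nondegenerate[OF center_mem] by (auto simp: g_def dV_fun_upd)
  ultimately have "deriv g z0 = 0"
    using holomorphic_derivI[OF hol open_W z0(1), of UNIV] open_W
    by (intro has_field_derivative_zero_if_power_locally_constant[where m = 5 and c = "K ^ 2"]) auto
  with z0(2) show False ..
qed

lemma no_miura_solution:
  "depends_upto r R \<Longrightarrow> slice_holomorphic R \<Longrightarrow> solves_miura R \<Longrightarrow> n + r \<le> N \<Longrightarrow> n + 5 \<le> N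
    \<Longrightarrow> False"
proof (induction r arbitrary: R)
  case 0
  then show ?case
    using no_solution_of_order_5 depends_upto_mono[of 0 R 5] by blast
next
  case (Suc r)
  show ?case
  proof (cases "Suc r \<le> 5")
    case True
    with Suc.prems show False
      using no_solution_of_order_5 depends_upto_mono[of "Suc r" R 5] by blast
  next
    case False
    then have "6 \<le> Suc r"
      by simp
    note reduced =
      solves_miura_reduce_order[OF Suc.prems(1-3) this Suc.prems(4), unfolded diff_Suc_1]
    from Suc.IH[OF reduced] Suc.prems(4,5) show False
      by simp
  qed
qed

end

lemma exists_miura_jet_box:
  assumes "6 \<le> n" "jet_analytic n S U" "(x0, t0, w0) \<in> U" "dV n S x0 t0 w0 \<noteq> 0"
  obtains X T W where "miura_jet_box S n X T W x0 t0 w0" "jet_box X T W \<subseteq> U"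
proof -
  have U: "open U" "continuous_on U (\<lambda>(x, t, w). S x t w)" and "depends_upto n S"
    and S_hol: "\<And>x t w k. (x, t, w) \<in> U \<Longrightarrow>
      (\<lambda>z. S x t (w(k := z))) holomorphic_on {z. (x, t, w(k := z)) \<in> U}"
    using assms(2) unfolding jet_analytic_def by auto
  show thesis
  proof (rule exists_nondegenerate_jet_box[OF U S_hol assms(3,4)])
    fix X W T
    assume box: "open X" "\<And>k. open (W k)" "\<And>k. convex (W k)"
      "(x0, t0, w0) \<in> jet_box X T W" "jet_box X T W \<subseteq> U"
      "\<And>x t w. (x, t, w) \<in> jet_box X T W \<Longrightarrow> \<exists>z\<in>W n. dV n S x t (w(n := z)) \<noteq> 0"
    have "miura_jet_box S n X T W x0 t0 w0"
    proof
      show "(\<lambda>z. S x t (w(n := z))) holomorphic_on W n" if "(x, t, w) \<in> jet_box X T W" for x t w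
        using holomorphic_on_jet_box_slice[where F = S and k = n, OF box(5) that
            S_hol[where k = n, OF subsetD[OF box(5) that]]] .
      show "\<exists>z\<in>W n. dV n S x t (w(n := z)) \<noteq> 0" if "(x, t, w) \<in> jet_box X T W" for x t w
        using box(6)[OF that] .
    qed (fact assms(1) \<open>depends_upto n S\<close> box(1-4))+
    then show thesis
      using box(5) by (rule that)
  qed
qed

theorem mainTheorem8:
  fixes S R :: jfun and n r :: nat
    and U :: "(complex \<times> complex \<times> (nat \<Rightarrow> complex)) set"
  assumes S_an: "jet_analytic n S U"
    and R_an: "jet_analytic r R U"
    and order_n: "\<exists>x t w. (x, t, w) \<in> U \<and> dV n S x t w \<noteq> 0"
    and miura: "\<forall>x t w. (x, t, w) \<in> U \<longrightarrow>
       Dt_evol (n + r + 6) R S x t w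
         = S x t w powr (5 / 2) * (Dx (n + r + 6) ^^ 5) S x t w"
  shows "n \<le> 5"
proof (rule ccontr)
  assume "\<not> n \<le> 5"
  then have "6 \<le> n"
    by simp
  obtain x0 t0 w0 where p0: "(x0, t0, w0) \<in> U" "dV n S x0 t0 w0 \<noteq> 0"
    using order_n by blast
  obtain X T W where box: "miura_jet_box S n X T W x0 t0 w0" "jet_box X T W \<subseteq> U"
    by (rule exists_miura_jet_box[OF \<open>6 \<le> n\<close> S_an p0])
  interpret miura_jet_box S n "n + r + 6" X T W x0 t0 w0
    by (fact box(1))
  have "depends_upto r R"
    using R_an by (simp add: jet_analytic_def)
  moreover have "slice_holomorphic R"
    using box(2) R_an by (rule slice_holomorphic_if_jet_analytic)
  moreover have "solves_miura R"
    unfolding solves_miura_def using miura box(2) by blast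
  ultimately show False
    by (rule no_miura_solution) simp_all
qed

end
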